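(* Let $M\ge 1$ and $K\ge 1$ be integers and $\rho>0$. Let $\mathbf{h}_1,\ldots,\mathbf{h}_K$ be i.i.d. random vectors with $\mathbf{h}_k\sim\mathcal{CN}(\mathbf{0},\mathbf{I}_M)$, so that each $X_k=\|\mathbf{h}_k\|^2$ has CDF $F_X(x)=1-\Gamma(M,x)/\Gamma(M)$ for $x\ge 0$. Let $\gamma=\rho\min_{1\le k\le K}X_k$ and $g(\gamma)=1+\gamma$, and define the Mellin transform $\mathcal{M}_{g(\gamma)}(s)=\mathbb{E}\left[g(\gamma)^{s-1}\right]=\int_0^\infty(1+\rho x)^{s-1}\,\mathrm{d}F_{X_{(1)}}(x)$, where $X_{(1)}=\min_{1\le k\le K}X_k$. Then for $s<1$, $$\mathcal{M}_{g(\gamma)}(s)=1+(s-1)\sum_{k_1+\cdots+k_M=K}\frac{\varphi\,\Gamma(1+\vartheta)}{\rho^{\vartheta}}\,U\!\left(\vartheta+1,\ \vartheta+s,\ K/\rho\right),$$ where the sum runs over all $M$-tuples $(k_1,\ldots,k_M)$ of nonnegative integers with $k_1+\cdots+k_M=K$, and for each such tuple $$\varphi=\frac{\binom{K}{k_1,k_2,\ldots,k_M}}{\prod_{n=0}^{M-1}(n!)^{k_{n+1}}},\qquad \vartheta=\sum_{\ell=0}^{M-1}\ell\, k_{\ell+1}.$$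
   Context: $\Gamma(a,x)=\int_x^\infty t^{a-1}e^{-t}\,\mathrm{d}t$ is the upper incomplete gamma function and $\Gamma(a)=\Gamma(a,0)$. $\binom{K}{k_1,\ldots,k_M}=\frac{K!}{k_1!\cdots k_M!}$ is the multinomial coefficient. $U(a,b,z)$ denotes Tricomi's confluent hypergeometric function of the second kind (also written $\Psi(a;b;z)$), which for $a>0$, $z>0$ has the integral representation $U(a,b,z)=\frac{1}{\Gamma(a)}\int_0^\infty e^{-zt}t^{a-1}(1+t)^{b-a-1}\,\mathrm{d}t$. The notation $\mathcal{CN}(\mathbf{0},\mathbf{I}_M)$ denotes a circularly symmetric complex Gaussian vector in $\mathbb{C}^M$ with identity covariance. *)

theory Defs
  imports "HOL-Probability.Probability"
begin

text \<open>Tricomi's confluent hypergeometric function of the second kind, via its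
  integral representation (valid for a > 0, z > 0, which is the only range used).\<close>
definition tricomi_U :: "real \<Rightarrow> real \<Rightarrow> real \<Rightarrow> real" where
  "tricomi_U a b z = (1 / Gamma a) *
     (LBINT t:{0<..}. exp (- z * t) * t powr (a - 1) * (1 + t) powr (b - a - 1))"

text \<open>Multinomial coefficient K! / (k_1! ... k_M!), with the tuple given as
  k 0, ..., k (M-1).\<close>
definition multinomial_coeff :: "nat \<Rightarrow> nat \<Rightarrow> (nat \<Rightarrow> nat) \<Rightarrow> real" where
  "multinomial_coeff K M k = fact K / (\<Prod>i<M. fact (k i))"

definition compositions :: "nat \<Rightarrow> nat \<Rightarrow> (nat \<Rightarrow> nat) set" where
  "compositions M K = {k. k \<in> {..<M} \<rightarrow>\<^sub>E (UNIV :: nat set) \<and> (\<Sum>i<M. k i) = K}"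

definition phi_coeff :: "nat \<Rightarrow> nat \<Rightarrow> (nat \<Rightarrow> nat) \<Rightarrow> real" where
  "phi_coeff K M k = multinomial_coeff K M k / (\<Prod>n<M. (fact n) ^ (k n))"

definition theta_exp :: "nat \<Rightarrow> (nat \<Rightarrow> nat) \<Rightarrow> nat" where
  "theta_exp M k = (\<Sum>l<M. l * k l)"

text \<open>h k m (k < K, m < M) is the m-th entry of the k-th vector h_k.
  h_1,...,h_K i.i.d. CN(0, I_M): all real and imaginary parts of all entries are
  independent real Gaussians with mean 0 and variance 1/2.\<close>
definition iid_CN_vectors :: "'a measure \<Rightarrow> nat \<Rightarrow> nat \<Rightarrow> (nat \<Rightarrow> nat \<Rightarrow> 'a \<Rightarrow> complex) \<Rightarrow> bool" where
  "iid_CN_vectors P M K h \<longleftrightarrow>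
     prob_space.indep_vars P (\<lambda>_. borel)
       (\<lambda>(k, m, b) \<omega>. if b then Re (h k m \<omega>) else Im (h k m \<omega>))
       ({..<K} \<times> {..<M} \<times> (UNIV :: bool set)) \<and>
     (\<forall>k<K. \<forall>m<M.
        distributed P lborel (\<lambda>\<omega>. Re (h k m \<omega>)) (normal_density 0 (sqrt (1/2))) \<and>
        distributed P lborel (\<lambda>\<omega>. Im (h k m \<omega>)) (normal_density 0 (sqrt (1/2))))"

end

theory Submission
  imports Defs
begin

text \<open>
  The real and imaginary parts of each entry of \<open>h\<^sub>k\<close> are independent \<open>N(0, 1/2)\<close>
  variables; their squares have the Gamma(1/2, 1) density, whose self-convolution is an arcsine
  integral equal to the Exp(1) density. So every \<open>|h\<^sub>k\<^sub>m|\<^sup>2\<close> is Exp(1), each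
  \<open>X\<^sub>k = \<parallel>h\<^sub>k\<parallel>\<^sup>2\<close> is Erlang with survival function
  \<open>Q t = (\<Sum>n<M. t\<^sup>n e\<^sup>-\<^sup>t / n!)\<close>, and the minimum of the \<open>K\<close> independent
  gains has survival function \<open>Q t ^ K\<close>.

  Writing \<open>1 - (1 + \<rho> z) powr (s - 1)\<close> as the integral of \<open>(1 - s) \<rho> (1 + \<rho> t) powr (s - 2)\<close>
  over \<open>[0, z)\<close> and exchanging the order of integration (the layer-cake formula) expresses
  \<open>1 - E[g powr (s - 1)]\<close> as the integral over \<open>t \<ge> 0\<close> of that derivative times
  \<open>Q t ^ K\<close>. The multinomial theorem expands \<open>Q t ^ K\<close> into the terms
  \<open>\<phi> t\<^sup>\<theta> e\<^sup>-\<^sup>K\<^sup>t\<close>, and the substitution \<open>u = \<rho> t\<close> turns each resulting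
  integral into \<open>\<Gamma>(\<theta> + 1) U(\<theta> + 1, \<theta> + s, K/\<rho>) / \<rho>\<^sup>\<theta>\<close>.
\<close>

section \<open>Compositions and the multinomial theorem\<close>

lemma finite_compositions: "finite (compositions M K)"
proof -
  have "compositions M K \<subseteq> PiE {..<M} (\<lambda>_. {..K})"
  proof
    fix k assume "k \<in> compositions M K"
    then have k: "k \<in> {..<M} \<rightarrow>\<^sub>E UNIV" "(\<Sum>i<M. k i) = K" by (auto simp: compositions_def)
    have "k i \<le> K" if "i < M" for i
      using member_le_sum[of i "{..<M}" k] that k(2) by auto
    then show "k \<in> PiE {..<M} (\<lambda>_. {..K})" using k(1) by (auto simp: PiE_def Pi_def)
  qed
  then show ?thesis by (rule finite_subset) (auto intro: finite_PiE)
qed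

lemma compositions_0: "compositions 0 K = (if K = 0 then {\<lambda>_. undefined} else {})"
  by (auto simp: compositions_def)

lemma compositions_Suc:
  "compositions (Suc M) K = (\<Union>j\<in>{..K}. (\<lambda>k. k(M := j)) ` compositions M (K - j))"
proof (intro equalityI subsetI)
  fix k assume "k \<in> compositions (Suc M) K"
  then have k: "k \<in> {..<Suc M} \<rightarrow>\<^sub>E UNIV" "(\<Sum>i<Suc M. k i) = K" by (auto simp: compositions_def)
  define k' where "k' = k(M := undefined)"
  have "(\<Sum>i<M. k' i) = (\<Sum>i<M. k i)" unfolding k'_def by (intro sum.cong) auto
  then have "(\<Sum>i<M. k' i) = K - k M" using k(2) by simp
  moreover have "k' \<in> {..<M} \<rightarrow>\<^sub>E UNIV" using k(1) unfolding k'_def by (auto simp: PiE_def extensional_def)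
  ultimately have "k' \<in> compositions M (K - k M)" by (simp add: compositions_def)
  moreover have "k = k'(M := k M)" unfolding k'_def by simp
  moreover have "k M \<le> K" using k(2) by simp
  ultimately show "k \<in> (\<Union>j\<in>{..K}. (\<lambda>k. k(M := j)) ` compositions M (K - j))" by blast
next
  fix k assume "k \<in> (\<Union>j\<in>{..K}. (\<lambda>k. k(M := j)) ` compositions M (K - j))"
  then obtain j k' where j: "j \<le> K" and k': "k' \<in> compositions M (K - j)" and kk: "k = k'(M := j)"
    by auto
  from k' have k'': "k' \<in> {..<M} \<rightarrow>\<^sub>E UNIV" "(\<Sum>i<M. k' i) = K - j" by (auto simp: compositions_def)
  have "(\<Sum>i<M. k i) = (\<Sum>i<M. k' i)" unfolding kk by (intro sum.cong) auto
  then have "(\<Sum>i<Suc M. k i) = K" using k''(2) j kk by simp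
  moreover have "k \<in> {..<Suc M} \<rightarrow>\<^sub>E UNIV" using k''(1) unfolding kk by (auto simp: PiE_def extensional_def)
  ultimately show "k \<in> compositions (Suc M) K" by (simp add: compositions_def)
qed

lemma inj_on_compositions_fun_upd: "inj_on (\<lambda>k. k(M := j)) (compositions M K)"
proof (rule inj_onI)
  fix k k' assume "k \<in> compositions M K" "k' \<in> compositions M K" "k(M := j) = k'(M := j)"
  then show "k = k'"
    unfolding compositions_def fun_eq_iff by (auto simp: PiE_def extensional_def) (metis less_irrefl)
qed

lemma prod_lessThan_Suc_fun_upd:
  "(\<Prod>n<Suc M. f n ((k(M := j)) n)) = f M j * (\<Prod>n<M. f n (k n))"
  by (auto simp: mult.commute intro!: prod.cong)

lemma multinomial_coeff_fun_upd:
  assumes "j \<le> K"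
  shows "multinomial_coeff K (Suc M) (k(M := j)) = real (K choose j) * multinomial_coeff (K - j) M k"
  using assms prod_lessThan_Suc_fun_upd[of "\<lambda>_ i. fact i :: real"]
  by (simp add: multinomial_coeff_def binomial_fact)

lemma sum_power_multinomial:
  fixes a :: "nat \<Rightarrow> real"
  shows "(\<Sum>n<M. a n) ^ K = (\<Sum>k\<in>compositions M K. multinomial_coeff K M k * (\<Prod>n<M. a n ^ k n))"
proof (induction M arbitrary: K)
  case 0
  then show ?case by (simp add: compositions_0 multinomial_coeff_def)
next
  case (Suc M)
  let ?term = "\<lambda>k. multinomial_coeff K (Suc M) k * (\<Prod>n<Suc M. a n ^ k n)"
  have "(\<Sum>n<Suc M. a n) ^ K = (a M + (\<Sum>n<M. a n)) ^ K" by (simp add: add.commute)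
  also have "\<dots> = (\<Sum>j\<le>K. real (K choose j) * a M ^ j * (\<Sum>n<M. a n) ^ (K - j))"
    by (rule binomial_ring)
  also have "\<dots> = (\<Sum>j\<le>K. \<Sum>k\<in>compositions M (K - j). ?term (k(M := j)))"
  proof (intro sum.cong refl)
    fix j assume "j \<in> {..K}"
    with prod_lessThan_Suc_fun_upd[of "\<lambda>n i. a n ^ i"]
    show "real (K choose j) * a M ^ j * (\<Sum>n<M. a n) ^ (K - j)
        = (\<Sum>k\<in>compositions M (K - j). ?term (k(M := j)))"
      by (simp add: Suc.IH sum_distrib_left multinomial_coeff_fun_upd mult_ac)
  qed
  also have "\<dots> = (\<Sum>j\<le>K. \<Sum>k\<in>(\<lambda>k. k(M := j)) ` compositions M (K - j). ?term k)"
    by (simp add: sum.reindex inj_on_compositions_fun_upd)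
  also have "\<dots> = (\<Sum>k\<in>compositions (Suc M) K. ?term k)"
    unfolding compositions_Suc
    by (rule sum.UNION_disjoint[symmetric])
       (auto intro: finite_compositions dest: fun_cong[where x = M])
  finally show ?case .
qed

lemma phi_coeff_nonneg: "0 \<le> phi_coeff K M c"
  unfolding phi_coeff_def multinomial_coeff_def by (intro divide_nonneg_nonneg prod_nonneg) auto

section \<open>Squares of Gaussians\<close>

text \<open>The Gamma(1/2, 1) density, the law of \<open>X\<^sup>2\<close> for \<open>X \<sim> N(0, 1/2)\<close>.\<close>
definition gamma_half_density :: "real \<Rightarrow> real" where
  "gamma_half_density u = (if 0 < u then exp (- u) / sqrt (pi * u) else 0)"

lemma gamma_half_density_nonneg [simp]: "0 \<le> gamma_half_density u"
  by (simp add: gamma_half_density_def)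

lemma borel_measurable_gamma_half_density [measurable]: "gamma_half_density \<in> borel_measurable borel"
  unfolding gamma_half_density_def by measurable

lemma nn_integral_even_Icc:
  fixes f :: "real \<Rightarrow> ennreal"
  assumes [measurable]: "f \<in> borel_measurable borel" and even: "\<And>x. f (- x) = f x"
  shows "(\<integral>\<^sup>+x. f x * indicator {-b..b} x \<partial>lborel) = 2 * (\<integral>\<^sup>+x. f x * indicator {0..b} x \<partial>lborel)"
proof -
  have "(\<integral>\<^sup>+x. f x * indicator {-b..0} x \<partial>lborel)
      = ennreal \<bar>-1\<bar> * (\<integral>\<^sup>+x. f (0 + -1 * x) * indicator {-b..0} (0 + -1 * x) \<partial>lborel)"
    by (rule nn_integral_real_affine) auto
  also have "\<dots> = (\<integral>\<^sup>+x. f x * indicator {0..b} x \<partial>lborel)"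
    by (simp add: even indicator_def conj_commute)
  finally have reflect: "(\<integral>\<^sup>+x. f x * indicator {-b..0} x \<partial>lborel) = (\<integral>\<^sup>+x. f x * indicator {0..b} x \<partial>lborel)" .
  have "(\<integral>\<^sup>+x. f x * indicator {-b..b} x \<partial>lborel)
      = (\<integral>\<^sup>+x. f x * indicator {-b..0} x + f x * indicator {0..b} x \<partial>lborel)"
    by (intro nn_integral_cong_AE) (use AE_lborel_singleton[of 0] in \<open>auto simp: indicator_def\<close>)
  also have "\<dots> = (\<integral>\<^sup>+x. f x * indicator {-b..0} x \<partial>lborel) + (\<integral>\<^sup>+x. f x * indicator {0..b} x \<partial>lborel)"
    by (rule nn_integral_add) auto
  finally show ?thesis
    by (simp add: reflect mult_2)
qed

lemma nn_integral_gamma_half_density_atMost: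
  assumes "0 \<le> a"
  shows "(\<integral>\<^sup>+x. ennreal (gamma_half_density x * indicator {..a} x) \<partial>lborel)
       = (\<integral>\<^sup>+x. ennreal (normal_density 0 (sqrt (1/2)) x) * indicator {-sqrt a..sqrt a} x \<partial>lborel)"
proof -
  define b where "b = sqrt a"
  have b: "0 \<le> b" "b\<^sup>2 = a" using assms by (auto simp: b_def)
  let ?\<phi> = "\<lambda>x. ennreal (normal_density 0 (sqrt (1/2)) x)"
  have "(\<integral>\<^sup>+x. ennreal (gamma_half_density x * indicator {..a} x) \<partial>lborel)
      = (\<integral>\<^sup>+x. ennreal (gamma_half_density x * indicator {(\<lambda>x. x\<^sup>2) 0..(\<lambda>x. x\<^sup>2) b} x) \<partial>lborel)"
    using b by (intro nn_integral_cong) (auto simp: gamma_half_density_def indicator_def)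
  also have "\<dots> = (\<integral>\<^sup>+x. ennreal (gamma_half_density (x\<^sup>2) * (2 * x) * indicator {0..b} x) \<partial>lborel)"
    by (rule nn_integral_substitution[where g' = "\<lambda>x. 2 * x"])
       (auto intro!: derivative_eq_intros continuous_on_mult continuous_on_const continuous_on_id
         simp: b set_borel_measurable_def)
  also have "\<dots> = (\<integral>\<^sup>+x. 2 * (?\<phi> x * indicator {0..b} x) \<partial>lborel)"
  proof (intro nn_integral_cong_AE)
    show "AE x in lborel. ennreal (gamma_half_density (x\<^sup>2) * (2 * x) * indicator {0..b} x)
        = 2 * (?\<phi> x * indicator {0..b} x)"
      using AE_lborel_singleton[of 0]
    proof eventually_elim
      case (elim x)
      show ?case
      proof (cases "0 < x")
        case True
        then have "sqrt (pi * x\<^sup>2) = sqrt pi * x" by (simp add: real_sqrt_mult)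
        with True have "gamma_half_density (x\<^sup>2) * (2 * x) = 2 * normal_density 0 (sqrt (1/2)) x"
          by (simp add: gamma_half_density_def normal_density_def field_simps)
        then show ?thesis
          by (simp add: numeral_mult_ennreal indicator_def)
      qed (use elim in \<open>auto simp: indicator_def\<close>)
    qed
  qed
  also have "\<dots> = 2 * (\<integral>\<^sup>+x. ?\<phi> x * indicator {0..b} x \<partial>lborel)"
    by (rule nn_integral_cmult) measurable
  also have "\<dots> = (\<integral>\<^sup>+x. ?\<phi> x * indicator {-b..b} x \<partial>lborel)"
    by (rule nn_integral_even_Icc[symmetric]) (auto simp: normal_density_def)
  finally show ?thesis unfolding b_def .
qed

lemma (in prob_space) distributed_square_normal:
  assumes X: "distributed M lborel X (\<lambda>x. ennreal (normal_density 0 (sqrt (1/2)) x))"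
  shows "distributed M lborel (\<lambda>\<omega>. (X \<omega>)\<^sup>2) gamma_half_density"
proof (rule distributedI_borel_atMost[where g = "\<lambda>a. measure M {\<omega>\<in>space M. (X \<omega>)\<^sup>2 \<le> a}"])
  have [measurable]: "X \<in> borel_measurable M"
    using distributed_measurable[OF X] by simp
  fix a
  show "emeasure M {\<omega>\<in>space M. (X \<omega>)\<^sup>2 \<le> a} = ennreal (measure M {\<omega>\<in>space M. (X \<omega>)\<^sup>2 \<le> a})"
    by (simp add: emeasure_eq_measure)
  have "(\<integral>\<^sup>+x. ennreal (gamma_half_density x * indicator {..a} x) \<partial>lborel) = emeasure M {\<omega>\<in>space M. (X \<omega>)\<^sup>2 \<le> a}"
  proof (cases "0 \<le> a")
    case True
    have "{\<omega>\<in>space M. (X \<omega>)\<^sup>2 \<le> a} = X -` {-sqrt a..sqrt a} \<inter> space M"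
    proof -
      have "(X \<omega>)\<^sup>2 \<le> a \<longleftrightarrow> X \<omega> \<in> {-sqrt a..sqrt a}" for \<omega>
        by (subst real_sqrt_le_iff[symmetric]) (auto simp: abs_le_iff)
      then show ?thesis by blast
    qed
    then show ?thesis
      using distributed_emeasure[OF X, of "{-sqrt a..sqrt a}"] nn_integral_gamma_half_density_atMost[OF True]
      by simp
  next
    case False
    then have "{\<omega>\<in>space M. (X \<omega>)\<^sup>2 \<le> a} = {}"
      by (auto simp: not_le intro: less_le_trans[OF _ zero_le_power2])
    moreover have "(\<integral>\<^sup>+x. ennreal (gamma_half_density x * indicator {..a} x) \<partial>lborel) = 0"
      using False by (intro nn_integral_zero' AE_I2) (auto simp: gamma_half_density_def indicator_def)
    ultimately show ?thesis by (simp only:) simp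
  qed
  with \<open>emeasure M _ = _\<close>
  show "(\<integral>\<^sup>+x. ennreal (gamma_half_density x * indicator {..a} x) \<partial>lborel)
      = ennreal (measure M {\<omega>\<in>space M. (X \<omega>)\<^sup>2 \<le> a})"
    by simp
qed (use distributed_measurable[OF X] in auto)

lemma nn_integral_arcsine:
  assumes z: "0 < z"
  shows "(\<integral>\<^sup>+y. ennreal (1 / sqrt ((z - y) * y) * indicator {0..z} y) \<partial>lborel) = ennreal pi"
proof -
  define g where "g t = z * (sin t)\<^sup>2" for t
  have "(\<integral>\<^sup>+y. ennreal (1 / sqrt ((z - y) * y) * indicator {0..z} y) \<partial>lborel)
      = (\<integral>\<^sup>+y. ennreal (1 / sqrt ((z - y) * y) * indicator {g 0..g (pi/2)} y) \<partial>lborel)"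
    by (simp add: g_def)
  also have "\<dots> = (\<integral>\<^sup>+t. ennreal (1 / sqrt ((z - g t) * g t) * (2 * z * sin t * cos t) * indicator {0..pi/2} t) \<partial>lborel)"
  proof (rule nn_integral_substitution)
    show "(g has_real_derivative 2 * z * sin t * cos t) (at t)" for t
      unfolding g_def by (auto intro!: derivative_eq_intros)
    show "0 \<le> 2 * z * sin t * cos t" if "t \<in> {0..pi/2}" for t
      using that z by (auto intro!: mult_nonneg_nonneg sin_ge_zero cos_ge_zero)
  qed (auto simp: set_borel_measurable_def intro!: continuous_on_mult continuous_on_sin continuous_on_cos
        continuous_on_const continuous_on_id)
  also have "\<dots> = (\<integral>\<^sup>+t. 2 * indicator {0<..<pi/2} t \<partial>lborel)"
  proof (intro nn_integral_cong)
    fix t :: real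
    show "ennreal (1 / sqrt ((z - g t) * g t) * (2 * z * sin t * cos t) * indicator {0..pi/2} t)
        = 2 * indicator {0<..<pi/2} t"
    proof (cases "0 < t \<and> t < pi/2")
      case True
      then have "0 < sin t" "0 < cos t" by (auto intro: sin_gt_zero cos_gt_zero)
      moreover have "z - g t = z * (cos t)\<^sup>2"
        by (simp add: g_def cos_squared_eq right_diff_distrib)
      then have "(z - g t) * g t = (z * sin t * cos t)\<^sup>2"
        by (simp only:) (simp add: g_def power2_eq_square)
      ultimately show ?thesis
        using True z by (simp add: indicator_def)
    next
      case False
      then consider "t \<notin> {0..pi/2}" | "t = 0" | "t = pi/2" by fastforce
      then show ?thesis
      proof cases
        case 3
        then show ?thesis by (simp only: cos_pi_half) (simp add: indicator_def)
      qed (auto simp: indicator_def)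
    qed
  qed
  also have "\<dots> = 2 * emeasure lborel {0<..<pi/2}"
    by (rule nn_integral_cmult_indicator) simp
  also have "\<dots> = ennreal pi"
    by (simp add: numeral_mult_ennreal)
  finally show ?thesis .
qed

lemma convolution_gamma_half_density:
  assumes "z \<noteq> 0"
  shows "(\<integral>\<^sup>+y. ennreal (gamma_half_density (z - y)) * ennreal (gamma_half_density y) \<partial>lborel)
       = ennreal (exponential_density 1 z)"
proof (cases "z < 0")
  case True
  then have "(\<integral>\<^sup>+y. ennreal (gamma_half_density (z - y)) * ennreal (gamma_half_density y) \<partial>lborel) = 0"
    by (intro nn_integral_zero' AE_I2) (auto simp: gamma_half_density_def)
  then show ?thesis
    using True by (simp add: exponential_density_def)
next
  case False
  with assms have z: "0 < z" by simp
  have "(\<integral>\<^sup>+y. ennreal (gamma_half_density (z - y)) * ennreal (gamma_half_density y) \<partial>lborel)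
      = (\<integral>\<^sup>+y. ennreal (exp (- z) / pi) * ennreal (1 / sqrt ((z - y) * y) * indicator {0..z} y) \<partial>lborel)"
  proof (intro nn_integral_cong)
    fix y :: real
    show "ennreal (gamma_half_density (z - y)) * ennreal (gamma_half_density y)
        = ennreal (exp (- z) / pi) * ennreal (1 / sqrt ((z - y) * y) * indicator {0..z} y)"
    proof (cases "0 < y \<and> y < z")
      case True
      have "sqrt (pi * (z - y)) * sqrt (pi * y) = pi * sqrt ((z - y) * y)"
        by (simp add: real_sqrt_mult)
      moreover have "exp (- (z - y)) * exp (- y) = exp (- z)"
        by (simp add: exp_add[symmetric])
      ultimately have "gamma_half_density (z - y) * gamma_half_density y
          = exp (- z) / pi * (1 / sqrt ((z - y) * y) * indicator {0..z} y)"
        using True by (simp add: gamma_half_density_def field_simps indicator_def)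
      then show ?thesis
        using True by (simp add: ennreal_mult[symmetric] indicator_def)
    qed (auto simp: gamma_half_density_def indicator_def)
  qed
  also have "\<dots> = ennreal (exp (- z) / pi) * (\<integral>\<^sup>+y. ennreal (1 / sqrt ((z - y) * y) * indicator {0..z} y) \<partial>lborel)"
    by (rule nn_integral_cmult) measurable
  also have "\<dots> = ennreal (exp (- z) / pi) * ennreal pi"
    by (simp only: nn_integral_arcsine[OF z])
  also have "\<dots> = ennreal (exponential_density 1 z)"
    using z by (simp add: exponential_density_def ennreal_mult[symmetric])
  finally show ?thesis .
qed

lemma (in prob_space) exponential_distributed_sum_squares_normal:
  assumes ind: "indep_var borel X borel Y"
    and X: "distributed M lborel X (\<lambda>x. ennreal (normal_density 0 (sqrt (1/2)) x))"
    and Y: "distributed M lborel Y (\<lambda>x. ennreal (normal_density 0 (sqrt (1/2)) x))"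
  shows "distributed M lborel (\<lambda>\<omega>. (X \<omega>)\<^sup>2 + (Y \<omega>)\<^sup>2) (exponential_density 1)"
proof -
  have "indep_var borel (\<lambda>\<omega>. (X \<omega>)\<^sup>2) borel (\<lambda>\<omega>. (Y \<omega>)\<^sup>2)"
    using indep_var_compose[OF ind, of "\<lambda>x. x\<^sup>2" borel "\<lambda>x. x\<^sup>2" borel] by (simp add: comp_def)
  from distributed_convolution[OF this distributed_square_normal[OF X] distributed_square_normal[OF Y]]
  have conv: "distributed M lborel (\<lambda>\<omega>. (X \<omega>)\<^sup>2 + (Y \<omega>)\<^sup>2)
      (\<lambda>x. \<integral>\<^sup>+y. ennreal (gamma_half_density (x - y)) * ennreal (gamma_half_density y) \<partial>lborel)" .
  moreover have "AE x in lborel. (\<integral>\<^sup>+y. ennreal (gamma_half_density (x - y)) * ennreal (gamma_half_density y) \<partial>lborel)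
      = ennreal (exponential_density 1 x)"
    using AE_lborel_singleton[of 0] by eventually_elim (rule convolution_gamma_half_density)
  ultimately show ?thesis
    by (subst (asm) distributed_cong_density) (auto dest: distributed_borel_measurable)
qed

section \<open>Channel gains of i.i.d. complex Gaussian vectors\<close>

lemma iid_CN_vectors_indep_cmod_sq:
  assumes "prob_space P" and "iid_CN_vectors P M K h"
  shows "prob_space.indep_vars P (\<lambda>_. borel) (\<lambda>(k, m) \<omega>. (cmod (h k m \<omega>))\<^sup>2) ({..<K} \<times> {..<M})"
proof -
  interpret prob_space P by fact
  define Y where "Y = (\<lambda>(k, m, b) \<omega>. if b then Re (h k m \<omega>) else Im (h k m \<omega>))"
  define B where "B = (\<lambda>(k :: nat, m :: nat). {k} \<times> {m} \<times> (UNIV :: bool set))"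
  define F where "F = (\<lambda>(k, m) (f :: nat \<times> nat \<times> bool \<Rightarrow> real). (f (k, m, True))\<^sup>2 + (f (k, m, False))\<^sup>2)"
  have "indep_vars (\<lambda>_. borel) Y ({..<K} \<times> {..<M} \<times> UNIV)"
    using assms(2) by (simp add: iid_CN_vectors_def Y_def)
  then have "indep_vars (\<lambda>j. PiM (B j) (\<lambda>_. borel)) (\<lambda>j \<omega>. restrict (\<lambda>i. Y i \<omega>) (B j)) ({..<K} \<times> {..<M})"
    by (rule indep_vars_restrict) (auto simp: B_def disjoint_family_on_def)
  then have "indep_vars (\<lambda>_. borel) (\<lambda>j \<omega>. F j (restrict (\<lambda>i. Y i \<omega>) (B j))) ({..<K} \<times> {..<M})"
    by (rule indep_vars_compose2) (auto simp: F_def B_def)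
  moreover have "F j (restrict (\<lambda>i. Y i \<omega>) (B j)) = (case j of (k, m) \<Rightarrow> (cmod (h k m \<omega>))\<^sup>2)" for j \<omega>
    by (auto simp: F_def B_def Y_def cmod_power2 split: prod.splits)
  ultimately show ?thesis
    by (simp add: case_prod_unfold)
qed

lemma iid_CN_vectors_exponential_cmod_sq:
  assumes "prob_space P" and iid: "iid_CN_vectors P M K h" and "k < K" "m < M"
  shows "distributed P lborel (\<lambda>\<omega>. (cmod (h k m \<omega>))\<^sup>2) (exponential_density 1)"
proof -
  interpret prob_space P by fact
  define Y where "Y = (\<lambda>(k, m, b) \<omega>. if b then Re (h k m \<omega>) else Im (h k m \<omega>))"
  have "indep_vars (\<lambda>_. borel) Y ({..<K} \<times> {..<M} \<times> UNIV)"
    using iid by (simp add: iid_CN_vectors_def Y_def)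
  then have "indep_vars (\<lambda>_. borel) Y (insert (k, m, True) {(k, m, False)})"
    by (rule indep_vars_subset) (use assms in auto)
  then have "indep_var borel (Y (k, m, True)) borel (\<lambda>\<omega>. \<Sum>i\<in>{(k, m, False)}. Y i \<omega>)"
    \<comment> \<open>pairwise independence, read off from a sum over a singleton\<close>
    by (rule indep_vars_sum[rotated 2]) auto
  then have "indep_var borel (\<lambda>\<omega>. Re (h k m \<omega>)) borel (\<lambda>\<omega>. Im (h k m \<omega>))"
    by (simp add: Y_def)
  from exponential_distributed_sum_squares_normal[OF this] iid assms(3,4)
  show ?thesis
    by (simp add: iid_CN_vectors_def cmod_power2)
qed

lemma iid_CN_vectors_indep_norm_sq:
  assumes "prob_space P" and "iid_CN_vectors P M K h"
  shows "prob_space.indep_vars P (\<lambda>_. borel) (\<lambda>k \<omega>. \<Sum>m<M. (cmod (h k m \<omega>))\<^sup>2) {..<K}"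
proof -
  interpret prob_space P by fact
  define W where "W = (\<lambda>(k, m) \<omega>. (cmod (h k m \<omega>))\<^sup>2)"
  have "indep_vars (\<lambda>_. borel) W ({..<K} \<times> {..<M})"
    using iid_CN_vectors_indep_cmod_sq[OF assms] by (simp add: W_def)
  then have "indep_vars (\<lambda>k. PiM ({k} \<times> {..<M}) (\<lambda>_. borel))
      (\<lambda>k \<omega>. restrict (\<lambda>i. W i \<omega>) ({k} \<times> {..<M})) {..<K}"
    by (rule indep_vars_restrict) (auto simp: disjoint_family_on_def)
  then have "indep_vars (\<lambda>_. borel)
      (\<lambda>k \<omega>. (\<lambda>f. \<Sum>m<M. f (k, m)) (restrict (\<lambda>i. W i \<omega>) ({k} \<times> {..<M}))) {..<K}"
    by (rule indep_vars_compose2) auto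
  then show ?thesis
    by (simp add: W_def)
qed

lemma iid_CN_vectors_erlang_norm_sq:
  assumes "prob_space P" and "iid_CN_vectors P M K h" and "M \<ge> 1" and "k < K"
  shows "distributed P lborel (\<lambda>\<omega>. \<Sum>m<M. (cmod (h k m \<omega>))\<^sup>2) (erlang_density (M - 1) 1)"
proof -
  interpret prob_space P by fact
  define W where "W = (\<lambda>(k, m) \<omega>. (cmod (h k m \<omega>))\<^sup>2)"
  have "indep_vars (\<lambda>_. borel) W ({k} \<times> {..<M})"
    unfolding W_def
    by (rule indep_vars_subset[OF iid_CN_vectors_indep_cmod_sq[OF assms(1,2)]]) (use assms(4) in auto)
  moreover have "distributed P lborel (W i) (erlang_density 0 1)" if "i \<in> {k} \<times> {..<M}" for i
    using that iid_CN_vectors_exponential_cmod_sq[OF assms(1,2,4)] by (auto simp: W_def)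
  ultimately have "distributed P lborel (\<lambda>\<omega>. \<Sum>i\<in>{k} \<times> {..<M}. W i \<omega>)
      (erlang_density ((\<Sum>i\<in>{k} \<times> {..<M}. Suc 0) - 1) 1)"
    using assms(3) by (intro erlang_distributed_sum) (auto simp: lessThan_empty_iff)
  moreover have "{k} \<times> {..<M} = Pair k ` {..<M}"
    by auto
  then have "(\<Sum>i\<in>{k} \<times> {..<M}. W i \<omega>) = (\<Sum>m<M. (cmod (h k m \<omega>))\<^sup>2)" for \<omega>
    by (simp add: W_def sum.reindex inj_on_def)
  ultimately show ?thesis
    by simp
qed

section \<open>Mellin transform of the minimum of Erlang variables\<close>

lemma one_minus_powr_eq_nn_integral:
  fixes \<rho> s z :: real
  assumes "0 < \<rho>" and "0 \<le> z" and "s \<le> 1"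
  shows "ennreal (1 - (1 + \<rho> * z) powr (s - 1))
       = (\<integral>\<^sup>+t. ennreal ((1 - s) * \<rho> * (1 + \<rho> * t) powr (s - 2)) * indicator {0..<z} t \<partial>lborel)"
proof -
  have deriv: "((\<lambda>t. - ((1 + \<rho> * t) powr (s - 1))) has_real_derivative
      (1 - s) * \<rho> * (1 + \<rho> * t) powr (s - 2)) (at t)"
    if "t \<in> {0..z}" for t
  proof -
    have "0 < 1 + \<rho> * t" using that assms by (simp add: add_pos_nonneg)
    then have "((\<lambda>t. - ((1 + \<rho> * t) powr (s - 1))) has_real_derivative
        - ((s - 1) * (1 + \<rho> * t) powr (s - 1 - 1) * \<rho>)) (at t)"
      by (auto intro!: derivative_eq_intros)
    then show ?thesis by (simp add: algebra_simps)
  qed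
  have "(\<integral>\<^sup>+t\<in>{0..z}. ennreal ((1 - s) * \<rho> * (1 + \<rho> * t) powr (s - 2)) \<partial>lborel)
      = ennreal (- ((1 + \<rho> * z) powr (s - 1)) - - ((1 + \<rho> * 0) powr (s - 1)))"
    by (rule nn_integral_FTC_Icc[OF _ deriv]) (use assms in \<open>auto intro!: mult_nonneg_nonneg\<close>)
  also have "(\<integral>\<^sup>+t\<in>{0..z}. ennreal ((1 - s) * \<rho> * (1 + \<rho> * t) powr (s - 2)) \<partial>lborel)
      = (\<integral>\<^sup>+t. ennreal ((1 - s) * \<rho> * (1 + \<rho> * t) powr (s - 2)) * indicator {0..<z} t \<partial>lborel)"
    by (intro nn_integral_cong_AE) (use AE_lborel_singleton[of z] in \<open>auto simp: indicator_def\<close>)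
  finally show ?thesis by simp
qed

lemma (in sigma_finite_measure) nn_integral_layer_cake:
  fixes Z :: "'a \<Rightarrow> real" and d :: "real \<Rightarrow> real"
  assumes [measurable]: "Z \<in> borel_measurable M" "d \<in> borel_measurable borel"
  shows "(\<integral>\<^sup>+\<omega>. (\<integral>\<^sup>+t. ennreal (d t) * indicator {0..<Z \<omega>} t \<partial>lborel) \<partial>M)
       = (\<integral>\<^sup>+t. ennreal (d t) * indicator {0..} t * emeasure M {\<omega>\<in>space M. t < Z \<omega>} \<partial>lborel)"
proof -
  interpret pair_sigma_finite M lborel ..
  have "(\<lambda>(\<omega>, t). ennreal (d t) * indicator {0..<Z \<omega>} t) \<in> borel_measurable (M \<Otimes>\<^sub>M lborel)"
    by (simp add: indicator_def) measurable
  then have "(\<integral>\<^sup>+\<omega>. (\<integral>\<^sup>+t. ennreal (d t) * indicator {0..<Z \<omega>} t \<partial>lborel) \<partial>M)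
      = (\<integral>\<^sup>+t. (\<integral>\<^sup>+\<omega>. ennreal (d t) * indicator {0..<Z \<omega>} t \<partial>M) \<partial>lborel)"
    by (rule Fubini'[symmetric])
  also have "\<dots> = (\<integral>\<^sup>+t. ennreal (d t) * indicator {0..} t * emeasure M {\<omega>\<in>space M. t < Z \<omega>} \<partial>lborel)"
  proof (intro nn_integral_cong)
    fix t :: real
    have "(\<integral>\<^sup>+\<omega>. ennreal (d t) * indicator {0..<Z \<omega>} t \<partial>M)
        = (\<integral>\<^sup>+\<omega>. (ennreal (d t) * indicator {0..} t) * indicator {\<omega>\<in>space M. t < Z \<omega>} \<omega> \<partial>M)"
      by (intro nn_integral_cong) (auto simp: indicator_def)
    also have "\<dots> = ennreal (d t) * indicator {0..} t * emeasure M {\<omega>\<in>space M. t < Z \<omega>}"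
      by (rule nn_integral_cmult_indicator) measurable
    finally show "(\<integral>\<^sup>+\<omega>. ennreal (d t) * indicator {0..<Z \<omega>} t \<partial>M)
        = ennreal (d t) * indicator {0..} t * emeasure M {\<omega>\<in>space M. t < Z \<omega>}" .
  qed
  finally show ?thesis .
qed

lemma (in prob_space) emeasure_Min_greater_erlang:
  assumes "finite I" and "I \<noteq> {}" and indep: "indep_vars (\<lambda>_. borel) X I"
    and erlang: "\<And>i. i \<in> I \<Longrightarrow> distributed M lborel (X i) (erlang_density n 1)"
    and "0 \<le> t"
  shows "emeasure M {\<omega>\<in>space M. t < (MIN i\<in>I. X i \<omega>)}
       = ennreal ((\<Sum>j\<le>n. t ^ j * exp (- t) / fact j) ^ card I)"
proof -
  have "{\<omega>\<in>space M. t < (MIN i\<in>I. X i \<omega>)} = (\<Inter>i\<in>I. X i -` {t<..} \<inter> space M)"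
    using assms(1,2) by auto
  then have "prob {\<omega>\<in>space M. t < (MIN i\<in>I. X i \<omega>)} = (\<Prod>i\<in>I. prob (X i -` {t<..} \<inter> space M))"
    using indep_varsD[OF indep assms(2,1)] by simp
  also have "\<dots> = (\<Prod>i\<in>I. \<Sum>j\<le>n. t ^ j * exp (- t) / fact j)"
  proof (rule prod.cong[OF refl])
    fix i assume "i \<in> I"
    have "prob (X i -` {t<..} \<inter> space M) = \<P>(\<omega> in M. t < X i \<omega>)"
      by (auto intro!: arg_cong[where f = prob])
    also have "\<dots> = 1 - erlang_CDF n 1 t"
      using erlang[OF \<open>i \<in> I\<close>] by (rule erlang_distributed_gt) (simp_all add: assms(5))
    finally show "prob (X i -` {t<..} \<inter> space M) = (\<Sum>j\<le>n. t ^ j * exp (- t) / fact j)"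
      using assms(5) by (simp add: erlang_CDF_def)
  qed
  finally show ?thesis
    by (simp add: emeasure_eq_measure)
qed

lemma erlang_survival_power_expansion:
  fixes t :: real
  shows "(\<Sum>n<M. t ^ n * exp (- t) / fact n) ^ K
    = (\<Sum>c\<in>compositions M K. phi_coeff K M c * t ^ theta_exp M c * exp (- (real K * t)))"
  unfolding sum_power_multinomial
proof (rule sum.cong[OF refl])
  fix c assume "c \<in> compositions M K"
  then have "(\<Sum>n<M. c n) = K" by (simp add: compositions_def)
  have "(\<Prod>n<M. (t ^ n * exp (- t) / fact n) ^ c n)
      = (\<Prod>n<M. t ^ (n * c n)) * (\<Prod>n<M. exp (- t) ^ c n) / (\<Prod>n<M. fact n ^ c n)"
    by (simp add: power_mult_distrib power_divide power_mult prod_dividef prod.distrib)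
  also have "(\<Prod>n<M. t ^ (n * c n)) = t ^ theta_exp M c"
    by (simp add: theta_exp_def power_sum)
  also have "(\<Prod>n<M. exp (- t) ^ c n) = exp (- t) ^ K"
    by (simp only: power_sum[symmetric] \<open>(\<Sum>n<M. c n) = K\<close>)
  also have "exp (- t) ^ K = exp (- (real K * t))"
    by (simp add: exp_of_nat_mult[symmetric])
  finally show "multinomial_coeff K M c * (\<Prod>n<M. (t ^ n * exp (- t) / fact n) ^ c n)
      = phi_coeff K M c * t ^ theta_exp M c * exp (- (real K * t))"
    by (simp add: phi_coeff_def)
qed

lemma tricomi_U_nonneg: "0 < a \<Longrightarrow> 0 \<le> tricomi_U a b z"
  unfolding tricomi_U_def set_lebesgue_integral_def
  by (intro mult_nonneg_nonneg integral_nonneg_AE AE_I2)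
     (auto simp: indicator_def intro!: mult_nonneg_nonneg Gamma_real_pos less_imp_le)

lemma nn_integral_tricomi_U:
  fixes n :: nat
  assumes z: "0 < z" and b: "b \<le> real n + 2"
  shows "(\<integral>\<^sup>+u. ennreal (exp (- z * u) * u ^ n * (1 + u) powr (b - n - 2) * indicator {0<..} u) \<partial>lborel)
       = ennreal (fact n * tricomi_U (n + 1) b z)"
proof -
  define H where "H u = exp (- z * u) * u ^ n * (1 + u) powr (b - n - 2) * indicator {0<..} u" for u
  have [measurable]: "H \<in> borel_measurable borel"
    unfolding H_def by measurable
  have H_nonneg: "0 \<le> H u" for u
    by (simp add: H_def indicator_def)
  text \<open>Since \<open>(1 + u) powr (b - n - 2) \<le> 1\<close>, the integrand is dominated by a multiple of
    the Erlang density of shape \<open>n\<close> and rate \<open>z\<close>.\<close>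
  have H_le: "H u \<le> fact n / z ^ Suc n * erlang_density n z u" for u
  proof (cases "0 < u")
    case True
    have "(1 + u) powr (b - n - 2) \<le> 1"
      using True b powr_mono[of "b - n - 2" 0 "1 + u"] by simp
    then have "H u \<le> exp (- z * u) * u ^ n"
      using True by (simp add: H_def mult_left_le)
    also have "\<dots> = fact n / z ^ Suc n * erlang_density n z u"
      using True z by (simp add: erlang_density_def field_simps)
    finally show ?thesis .
  qed (use z in \<open>simp add: H_def\<close>)
  have "(\<integral>\<^sup>+u. H u \<partial>lborel) \<le> (\<integral>\<^sup>+u. ennreal (fact n / z ^ Suc n) * ennreal (erlang_density n z u) \<partial>lborel)"
    using H_le z by (intro nn_integral_mono) (simp add: ennreal_mult[symmetric])
  also have "\<dots> = ennreal (fact n / z ^ Suc n)"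
    using nn_integral_erlang_ith_moment[OF z, of n 0] by (simp add: nn_integral_cmult)
  finally have "integrable lborel H"
    using H_nonneg by (intro integrableI_nonneg) (auto intro: le_less_trans)
  then have "(\<integral>\<^sup>+u. H u \<partial>lborel) = ennreal (integral\<^sup>L lborel H)"
    using H_nonneg by (intro nn_integral_eq_integral) auto
  also have "integral\<^sup>L lborel H = fact n * tricomi_U (n + 1) b z"
  proof -
    have "H = (\<lambda>u. indicator {0<..} u * (exp (- z * u) * u powr (real (n + 1) - 1) * (1 + u) powr (b - real (n + 1) - 1)))"
      by (intro ext) (simp add: H_def powr_realpow indicator_def algebra_simps)
    then show ?thesis
      by (simp add: tricomi_U_def set_lebesgue_integral_def Gamma_fact)
  qed
  finally show ?thesis
    by (simp add: H_def)
qed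

lemma nn_integral_tricomi_U_scaled:
  fixes n :: nat
  assumes \<rho>: "0 < \<rho>" and c: "0 < c" and s: "s \<le> 2"
  shows "(\<integral>\<^sup>+t. ennreal (\<rho> * (1 + \<rho> * t) powr (s - 2) * t ^ n * exp (- (c * t)) * indicator {0..} t) \<partial>lborel)
       = ennreal (Gamma (1 + real n) * tricomi_U (real n + 1) (real n + s) (c / \<rho>) / \<rho> ^ n)"
proof -
  define G where "G u = exp (- (c / \<rho>) * u) * u ^ n * (1 + u) powr ((real n + s) - n - 2) * indicator {0<..} u" for u
  have "(\<integral>\<^sup>+t. ennreal (\<rho> * (1 + \<rho> * t) powr (s - 2) * t ^ n * exp (- (c * t)) * indicator {0..} t) \<partial>lborel)
      = ennreal \<bar>1 / \<rho>\<bar> * (\<integral>\<^sup>+u. ennreal (\<rho> * (1 + \<rho> * (0 + 1 / \<rho> * u)) powr (s - 2) * (0 + 1 / \<rho> * u) ^ n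
          * exp (- (c * (0 + 1 / \<rho> * u))) * indicator {0..} (0 + 1 / \<rho> * u)) \<partial>lborel)"
    using \<rho> by (intro nn_integral_real_affine) auto
  also have "\<dots> = ennreal (1 / \<rho>) * (\<integral>\<^sup>+u. ennreal (\<rho> / \<rho> ^ n) * ennreal (G u) \<partial>lborel)"
  proof -
    have "AE u in lborel. ennreal (\<rho> * (1 + \<rho> * (0 + 1 / \<rho> * u)) powr (s - 2) * (0 + 1 / \<rho> * u) ^ n
          * exp (- (c * (0 + 1 / \<rho> * u))) * indicator {0..} (0 + 1 / \<rho> * u)) = ennreal (\<rho> / \<rho> ^ n) * ennreal (G u)"
      using AE_lborel_singleton[of 0]
      by eventually_elim
         (use \<rho> in \<open>auto simp: G_def indicator_def ennreal_mult[symmetric] power_divide field_simps\<close>)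
    then show ?thesis
      using \<rho> by (simp add: nn_integral_cong_AE)
  qed
  also have "\<dots> = ennreal (1 / \<rho>) * (ennreal (\<rho> / \<rho> ^ n) * ennreal (fact n * tricomi_U (n + 1) (real n + s) (c / \<rho>)))"
    using nn_integral_tricomi_U[of "c / \<rho>" "real n + s" n] \<rho> c s
    by (subst nn_integral_cmult) (auto simp: G_def)
  also have "\<dots> = ennreal (Gamma (1 + real n) * tricomi_U (real n + 1) (real n + s) (c / \<rho>) / \<rho> ^ n)"
    using \<rho> by (simp add: ennreal_mult[symmetric] tricomi_U_nonneg Gamma_fact add.commute)
  finally show ?thesis .
qed

lemma nn_integral_survival_power_expansion:
  assumes \<rho>: "0 < \<rho>" and s: "s \<le> 1" and K: "K \<ge> 1"
  shows "(\<integral>\<^sup>+t. ennreal ((1 - s) * \<rho> * (1 + \<rho> * t) powr (s - 2)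
            * (\<Sum>n<M. t ^ n * exp (- t) / fact n) ^ K * indicator {0..} t) \<partial>lborel)
       = ennreal ((1 - s) * (\<Sum>c\<in>compositions M K.
           phi_coeff K M c * Gamma (1 + real (theta_exp M c)) / \<rho> ^ theta_exp M c
           * tricomi_U (real (theta_exp M c) + 1) (real (theta_exp M c) + s) (real K / \<rho>)))"
proof -
  define T where "T n t = \<rho> * (1 + \<rho> * t) powr (s - 2) * t ^ n * exp (- (real K * t)) * indicator {0..} t" for n t
  define X where "X c = phi_coeff K M c * Gamma (1 + real (theta_exp M c)) / \<rho> ^ theta_exp M c
           * tricomi_U (real (theta_exp M c) + 1) (real (theta_exp M c) + s) (real K / \<rho>)" for c
  have X_nonneg: "0 \<le> X c" for c
    using \<rho> by (auto simp: X_def phi_coeff_nonneg tricomi_U_nonneg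
        intro!: mult_nonneg_nonneg divide_nonneg_pos Gamma_real_pos less_imp_le)
  have T_nonneg: "0 \<le> T n t" for n t
    using \<rho> by (simp add: T_def indicator_def)
  have "ennreal ((1 - s) * \<rho> * (1 + \<rho> * t) powr (s - 2) * (\<Sum>n<M. t ^ n * exp (- t) / fact n) ^ K * indicator {0..} t)
      = (\<Sum>c\<in>compositions M K. ennreal ((1 - s) * phi_coeff K M c) * ennreal (T (theta_exp M c) t))" for t
  proof -
    have "(1 - s) * \<rho> * (1 + \<rho> * t) powr (s - 2) * (\<Sum>n<M. t ^ n * exp (- t) / fact n) ^ K * indicator {0..} t
        = (\<Sum>c\<in>compositions M K. (1 - s) * phi_coeff K M c * T (theta_exp M c) t)"
      unfolding erlang_survival_power_expansion sum_distrib_left sum_distrib_right T_def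
      by (intro sum.cong refl) (simp add: mult_ac)
    then show ?thesis
      using s \<rho> T_nonneg phi_coeff_nonneg
      by (simp add: ennreal_mult[symmetric] sum_ennreal)
  qed
  then have "(\<integral>\<^sup>+t. ennreal ((1 - s) * \<rho> * (1 + \<rho> * t) powr (s - 2)
            * (\<Sum>n<M. t ^ n * exp (- t) / fact n) ^ K * indicator {0..} t) \<partial>lborel)
      = (\<Sum>c\<in>compositions M K. ennreal ((1 - s) * phi_coeff K M c) * (\<integral>\<^sup>+t. ennreal (T (theta_exp M c) t) \<partial>lborel))"
    by (simp add: nn_integral_sum nn_integral_cmult T_def)
  also have "\<dots> = (\<Sum>c\<in>compositions M K. ennreal ((1 - s) * X c))"
    using \<rho> s K
    by (intro sum.cong refl)
       (simp add: T_def X_def nn_integral_tricomi_U_scaled ennreal_mult[symmetric] phi_coeff_nonneg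
         tricomi_U_nonneg divide_nonneg_pos mult_nonneg_nonneg)
  also have "\<dots> = ennreal ((1 - s) * (\<Sum>c\<in>compositions M K. X c))"
    using s X_nonneg by (simp add: sum_distrib_left)
  finally show ?thesis
    by (simp add: X_def)
qed

lemma (in prob_space) nn_integral_one_minus_powr:
  fixes Z :: "'a \<Rightarrow> real"
  assumes [measurable]: "Z \<in> borel_measurable M"
    and Z_nonneg: "AE \<omega> in M. 0 \<le> Z \<omega>" and \<rho>: "0 < \<rho>" and s: "s \<le> 1"
  shows "(\<integral>\<^sup>+\<omega>. ennreal (1 - (1 + \<rho> * Z \<omega>) powr (s - 1)) \<partial>M)
       = (\<integral>\<^sup>+t. ennreal ((1 - s) * \<rho> * (1 + \<rho> * t) powr (s - 2)) * indicator {0..} t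
            * emeasure M {\<omega>\<in>space M. t < Z \<omega>} \<partial>lborel)"
proof -
  have "(\<integral>\<^sup>+\<omega>. ennreal (1 - (1 + \<rho> * Z \<omega>) powr (s - 1)) \<partial>M)
      = (\<integral>\<^sup>+\<omega>. (\<integral>\<^sup>+t. ennreal ((1 - s) * \<rho> * (1 + \<rho> * t) powr (s - 2))
          * indicator {0..<Z \<omega>} t \<partial>lborel) \<partial>M)"
    using Z_nonneg by (intro nn_integral_cong_AE) (auto simp: one_minus_powr_eq_nn_integral \<rho> s)
  also have "\<dots> = (\<integral>\<^sup>+t. ennreal ((1 - s) * \<rho> * (1 + \<rho> * t) powr (s - 2)) * indicator {0..} t
      * emeasure M {\<omega>\<in>space M. t < Z \<omega>} \<partial>lborel)"
    by (rule nn_integral_layer_cake) measurable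
  finally show ?thesis .
qed

lemma (in prob_space) expectation_one_plus_powr:
  fixes Z :: "'a \<Rightarrow> real"
  assumes [measurable]: "Z \<in> borel_measurable M"
    and Z_nonneg: "AE \<omega> in M. 0 \<le> Z \<omega>" and \<rho>: "0 < \<rho>" and s: "s \<le> 1"
    and nn: "(\<integral>\<^sup>+\<omega>. ennreal (1 - (1 + \<rho> * Z \<omega>) powr (s - 1)) \<partial>M) = ennreal c" and "0 \<le> c"
  shows "expectation (\<lambda>\<omega>. (1 + \<rho> * Z \<omega>) powr (s - 1)) = 1 - c"
proof -
  have bounds: "AE \<omega> in M. 0 \<le> (1 + \<rho> * Z \<omega>) powr (s - 1) \<and> (1 + \<rho> * Z \<omega>) powr (s - 1) \<le> 1"
    using Z_nonneg by eventually_elim (use \<rho> s powr_mono[of "s - 1" 0] in auto)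
  then have "expectation (\<lambda>\<omega>. 1 - (1 + \<rho> * Z \<omega>) powr (s - 1)) = c"
    using nn \<open>0 \<le> c\<close> by (subst integral_eq_nn_integral) (auto elim!: eventually_mono)
  moreover have "integrable M (\<lambda>\<omega>. (1 + \<rho> * Z \<omega>) powr (s - 1))"
    using bounds by (intro integrable_const_bound[where B = 1]) (auto elim!: eventually_mono)
  ultimately show ?thesis
    by (simp add: prob_space)
qed

lemma expectation_powr_Min_erlang:
  fixes S :: "nat \<Rightarrow> 'a \<Rightarrow> real"
  assumes P: "prob_space P" and K: "K \<ge> 1" and M: "M \<ge> 1" and \<rho>: "0 < \<rho>" and s: "s \<le> 1"
    and indep: "prob_space.indep_vars P (\<lambda>_. borel) S {..<K}"
    and erlang: "\<And>k. k < K \<Longrightarrow> distributed P lborel (S k) (erlang_density (M - 1) 1)"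
  shows "prob_space.expectation P (\<lambda>\<omega>. (1 + \<rho> * (MIN k\<in>{..<K}. S k \<omega>)) powr (s - 1))
     = 1 + (s - 1) * (\<Sum>c\<in>compositions M K.
          phi_coeff K M c * Gamma (1 + real (theta_exp M c)) / \<rho> ^ theta_exp M c
          * tricomi_U (real (theta_exp M c) + 1) (real (theta_exp M c) + s) (real K / \<rho>))"
    (is "_ = 1 + (s - 1) * ?C")
proof -
  interpret prob_space P by (rule P)
  define Z where "Z \<omega> = (MIN k\<in>{..<K}. S k \<omega>)" for \<omega>
  define Q where "Q t = (\<Sum>n<M. t ^ n * exp (- t) / fact n)" for t :: real
  have K_ne: "{..<K} \<noteq> {}"
    using K by (auto simp: lessThan_empty_iff)
  have "S k \<in> borel_measurable P" if "k < K" for k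
    using distributed_measurable[OF erlang[OF that]] by simp
  then have [measurable]: "Z \<in> borel_measurable P"
    unfolding Z_def by (intro borel_measurable_Min) auto
  have "AE \<omega> in P. 0 \<le> S k \<omega>" if "k < K" for k
    using distributed_AE2[OF erlang[OF that], of "\<lambda>x. 0 \<le> x"] by (simp add: erlang_density_def AE_I2)
  then have "AE \<omega> in P. \<forall>k\<in>{..<K}. 0 \<le> S k \<omega>"
    by (subst AE_finite_all) auto
  then have Z_nonneg: "AE \<omega> in P. 0 \<le> Z \<omega>"
    by eventually_elim (use K_ne in \<open>simp add: Z_def\<close>)
  have survival: "emeasure P {\<omega>\<in>space P. t < Z \<omega>} = ennreal (Q t ^ K)" if "0 \<le> t" for t
  proof -
    have "{..M - 1} = {..<M}"
      using M by auto
    then show ?thesis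
      using emeasure_Min_greater_erlang[OF _ K_ne indep, of "M - 1" t] erlang that
      by (simp add: Z_def Q_def)
  qed
  have "(\<integral>\<^sup>+\<omega>. ennreal (1 - (1 + \<rho> * Z \<omega>) powr (s - 1)) \<partial>P)
      = (\<integral>\<^sup>+t. ennreal ((1 - s) * \<rho> * (1 + \<rho> * t) powr (s - 2) * Q t ^ K * indicator {0..} t) \<partial>lborel)"
    unfolding nn_integral_one_minus_powr[OF _ Z_nonneg \<rho> s, simplified]
  proof (intro nn_integral_cong)
    fix t :: real
    show "ennreal ((1 - s) * \<rho> * (1 + \<rho> * t) powr (s - 2)) * indicator {0..} t * emeasure P {\<omega>\<in>space P. t < Z \<omega>}
        = ennreal ((1 - s) * \<rho> * (1 + \<rho> * t) powr (s - 2) * Q t ^ K * indicator {0..} t)"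
    proof (cases "0 \<le> t")
      case True
      moreover have "0 \<le> Q t"
        using True by (auto simp: Q_def intro!: sum_nonneg)
      ultimately show ?thesis
        using \<rho> s by (simp add: survival ennreal_mult[symmetric])
    qed simp
  qed
  also have "\<dots> = ennreal ((1 - s) * ?C)"
    unfolding Q_def by (rule nn_integral_survival_power_expansion[OF \<rho> s K])
  finally have "expectation (\<lambda>\<omega>. (1 + \<rho> * Z \<omega>) powr (s - 1)) = 1 - (1 - s) * ?C"
    using \<rho> s by (intro expectation_one_plus_powr Z_nonneg)
      (auto intro!: sum_nonneg mult_nonneg_nonneg divide_nonneg_pos phi_coeff_nonneg tricomi_U_nonneg
        Gamma_real_pos[THEN less_imp_le])
  then show ?thesis
    by (simp add: Z_def algebra_simps)
qed

theorem theorem1: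
  fixes P :: "'a measure" and M K :: nat and \<rho> s :: real
    and h :: "nat \<Rightarrow> nat \<Rightarrow> 'a \<Rightarrow> complex"
  assumes "prob_space P"
    and "M \<ge> 1" and "K \<ge> 1" and "\<rho> > 0" and "s < 1"
    and "iid_CN_vectors P M K h"
  shows "prob_space.expectation P
           (\<lambda>\<omega>. (1 + \<rho> * (MIN k\<in>{..<K}. (\<Sum>m<M. (cmod (h k m \<omega>))\<^sup>2))) powr (s - 1))
         = 1 + (s - 1) * (\<Sum>k\<in>compositions M K.
             phi_coeff K M k * Gamma (1 + real (theta_exp M k)) / \<rho> ^ theta_exp M k
             * tricomi_U (real (theta_exp M k) + 1) (real (theta_exp M k) + s) (real K / \<rho>))"
  using expectation_powr_Min_erlang[OF assms(1,3,2,4) _ iid_CN_vectors_indep_norm_sq[OF assms(1,6)]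
      iid_CN_vectors_erlang_norm_sq[OF assms(1,6,2)]] assms(5)
  by simp

end
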